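(* Let $\mathcal A\in\mathbb R^{n\times p\times l}$ with $n\ge p$, and let $\mathcal A=\mathcal U*\mathcal S*\mathcal V^\top$ be a compact t-SVD of $\mathcal A$. Then $\mathcal P=\mathcal U*\mathcal V^\top$ (the $\mathcal P$-factor of the t-polar decomposition of $\mathcal A$) is an optimal solution of $\max_{\mathcal P\in\mathrm{St}(n,p,l)}\langle\mathcal A,\mathcal P\rangle$.
   Context: Frontal slices $A^{(i)}=\mathcal A(:,:,i)$. The t-product is $\mathcal A*\mathcal B=\operatorname{fold}(\operatorname{bcirc}(\mathcal A)\operatorname{unfold}(\mathcal B))$, where $\operatorname{bcirc}(\mathcal A)$ is the block circulant matrix with $(i,j)$ block $A^{(((i-j)\bmod l)+1)}$, $\operatorname{unfold}$ stacks frontal slices vertically, $\operatorname{fold}$ is its inverse. Transpose: $\mathcal A^\top$ has frontal slices $(A^{(1)})^\top,(A^{(l)})^\top,\dots,(A^{(2)})^\top$. $\mathcal I$ identity tensor. $\mathrm{St}(n,p,l)=\{\mathcal X\in\mathbb R^{n\times p\times l}:\mathcal X^\top*\mathcal X=\mathcal I\}$; a tensor $\mathcal V\in\mathbb R^{p\times p\times l}$ is orthogonal if $\mathcal V^\top*\mathcal V=\mathcal V*\mathcal V^\top=\mathcal I$. $\langle\mathcal A,\mathcal B\rangle=\sum a_{ijk}b_{ijk}$. The DFT $L(\mathcal A)$ has frontal slices $\sum_{j=1}^l\omega^{(k-1)(j-1)}A^{(j)}$, $\omega=e^{-2\pi\mathrm i/l}$. A compact t-SVD of $\mathcal A$ is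 a factorization $\mathcal A=\mathcal U*\mathcal S*\mathcal V^\top$ with $\mathcal U\in\mathrm{St}(n,p,l)$, $\mathcal V\in\mathbb R^{p\times p\times l}$ orthogonal and $\mathcal S\in\mathbb R^{p\times p\times l}$ f-diagonal (every frontal slice diagonal), where, by the paper's convention, the frontal slices of $L(\mathcal S)$ are diagonal with nonnegative real entries. *)

theory Defs
  imports Complex_Main
begin

text \<open>Third-order real tensors are represented as functions nat => nat => nat => real;
  indices are 0-based and only entries inside the stated dimensions are meaningful.
  Frontal slice k (0-based) is the matrix (i,j) |-> A i j k.\<close>

type_synonym tensor = "nat \<Rightarrow> nat \<Rightarrow> nat \<Rightarrow> real"

definition teq :: "nat \<Rightarrow> nat \<Rightarrow> nat \<Rightarrow> tensor \<Rightarrow> tensor \<Rightarrow> bool" where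
  "teq m q l A B \<longleftrightarrow> (\<forall>i<m. \<forall>j<q. \<forall>k<l. A i j k = B i j k)"

text \<open>t-product of A (m x p x l) and B (p x q x l): fold(bcirc(A) unfold(B)).
  The (k,t) block of bcirc(A) is the slice A^((k-t) mod l), so the k-th frontal slice of
  the product is the sum over t of A^((k-t) mod l) B^(t).\<close>
definition tprod :: "nat \<Rightarrow> nat \<Rightarrow> tensor \<Rightarrow> tensor \<Rightarrow> tensor" where
  "tprod p l A B = (\<lambda>i j k. \<Sum>t<l. \<Sum>m<p. A i m ((k + l - t) mod l) * B m j t)"

text \<open>Tensor transpose: slices (A^(1))^T, (A^(l))^T, ..., (A^(2))^T (1-based).\<close>
definition ttrans :: "nat \<Rightarrow> tensor \<Rightarrow> tensor" where
  "ttrans l A = (\<lambda>i j k. A j i ((l - k) mod l))"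

definition tid :: tensor where
  "tid = (\<lambda>i j k. if i = j \<and> k = 0 then 1 else 0)"

definition tStiefel :: "nat \<Rightarrow> nat \<Rightarrow> nat \<Rightarrow> tensor set" where
  "tStiefel n p l = {X. teq p p l (tprod n l (ttrans l X) X) tid}"

definition torthogonal :: "nat \<Rightarrow> nat \<Rightarrow> tensor \<Rightarrow> bool" where
  "torthogonal p l V \<longleftrightarrow>
     teq p p l (tprod p l (ttrans l V) V) tid \<and> teq p p l (tprod p l V (ttrans l V)) tid"

definition tinner :: "nat \<Rightarrow> nat \<Rightarrow> nat \<Rightarrow> tensor \<Rightarrow> tensor \<Rightarrow> real" where
  "tinner n p l A B = (\<Sum>i<n. \<Sum>j<p. \<Sum>k<l. A i j k * B i j k)"

definition tdft :: "nat \<Rightarrow> tensor \<Rightarrow> nat \<Rightarrow> nat \<Rightarrow> nat \<Rightarrow> complex" where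
  "tdft l A = (\<lambda>i j k. \<Sum>t<l. exp (- 2 * of_real pi * \<i> * of_nat (k * t) / of_nat l)
                                  * of_real (A i j t))"

definition fdiag :: "nat \<Rightarrow> nat \<Rightarrow> tensor \<Rightarrow> bool" where
  "fdiag p l S \<longleftrightarrow> (\<forall>i<p. \<forall>j<p. \<forall>k<l. i \<noteq> j \<longrightarrow> S i j k = 0)"

definition compact_tsvd :: "nat \<Rightarrow> nat \<Rightarrow> nat \<Rightarrow> tensor \<Rightarrow> tensor \<Rightarrow> tensor \<Rightarrow> tensor \<Rightarrow> bool" where
  "compact_tsvd n p l A U S V \<longleftrightarrow>
     U \<in> tStiefel n p l \<and> torthogonal p l V \<and> fdiag p l S \<and>
     (\<forall>i<p. \<forall>j<p. \<forall>k<l. (i \<noteq> j \<longrightarrow> tdft l S i j k = 0) \<and>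
                          Im (tdft l S i i k) = 0 \<and> Re (tdft l S i i k) \<ge> 0) \<and>
     teq n p l A (tprod p l (tprod p l U S) (ttrans l V))"

end

theory Submission
  imports Defs "HOL-Analysis.Complex_Transcendental"
begin

text \<open>
  Write \<A> = \<U> * \<S> * \<V>^T. The adjoint rules of the t-product give
  \<langle>\<A>, \<Q>\<rangle> = \<langle>\<S>, \<U>^T * (\<Q> * \<V>)\<rangle>, and \<Q> * \<V> lies in the Stiefel set whenever \<Q> does.
  Each diagonal tube of \<S> generates a circulant matrix whose eigenvalues are the entries of its
  DFT; these are real and nonnegative, so \<S> is symmetric and satisfies 0 \<le> \<langle>\<M> * \<S>, \<M>\<rangle>.
  For \<X>, \<Y> in the Stiefel set, expanding 0 \<le> \<langle>(\<X> - \<Y>) * \<S>, \<X> - \<Y>\<rangle> yields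
  \<langle>\<S>, \<X>^T * \<Y>\<rangle> \<le> \<langle>\<S>, \<I>\<rangle>. With \<X> = \<U> and \<Y> = \<Q> * \<V> this bounds
  \<langle>\<A>, \<Q>\<rangle> by \<langle>\<S>, \<I>\<rangle>, which is attained at \<Q> = \<P> because \<P> * \<V> = \<U>.
\<close>

section \<open>Cyclic convolution of tubes\<close>

text \<open>
  A tube is a function on {..<l}. The t-product is the matrix product over tubes in which
  scalars multiply by cyclic convolution (lemma \<open>tprod_tconv\<close>).
\<close>

definition tconv :: "nat \<Rightarrow> (nat \<Rightarrow> real) \<Rightarrow> (nat \<Rightarrow> real) \<Rightarrow> nat \<Rightarrow> real" where
  "tconv l a b k = (\<Sum>t<l. a ((k + l - t) mod l) * b t)"

definition trev :: "nat \<Rightarrow> (nat \<Rightarrow> real) \<Rightarrow> nat \<Rightarrow> real" where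
  "trev l a k = a ((l - k) mod l)"

definition tdelta :: "nat \<Rightarrow> real" where
  "tdelta k = (if k = 0 then 1 else 0)"

lemma int_cyclic_diff: "t \<le> l \<Longrightarrow> int ((k + l - t) mod l) = (int k - int t) mod int l"
proof -
  assume "t \<le> l"
  then have "int (k + l - t) = (int k - int t) + int l" by simp
  then show ?thesis by (simp add: of_nat_mod)
qed

lemma int_cyclic_neg: "t \<le> l \<Longrightarrow> int ((l - t) mod l) = (- int t) mod int l"
  by (simp add: of_nat_mod)

lemma int_mod_add: "int ((a + b) mod l) = (int a + int b) mod int l"
  by (simp add: of_nat_mod)

text \<open>Index identities modulo l are proved in \<open>int\<close>, where (k + l - t) mod l becomes (k - t) mod l.\<close>

lemmas cyclic_index_simps =
  int_cyclic_diff int_cyclic_neg int_mod_add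
  mod_diff_left_eq mod_diff_right_eq mod_minus_eq mod_add_left_eq mod_add_right_eq

lemma cyclic_reflect_reflect: "c < (l::nat) \<Longrightarrow> k < l \<Longrightarrow> (c + l - (c + l - k) mod l) mod l = k"
  by (subst int_int_eq[symmetric]) (simp add: cyclic_index_simps)

lemma cyclic_diff_eq_0_iff: "k < (l::nat) \<Longrightarrow> t < l \<Longrightarrow> (k + l - t) mod l = 0 \<longleftrightarrow> t = k"
proof
  assume "k < l" "t < l" "(k + l - t) mod l = 0"
  then show "t = k"
    using cyclic_reflect_reflect[of k l t] by simp
qed simp

lemma sum_cyclic_shift: "t \<le> (l::nat) \<Longrightarrow> (\<Sum>k<l. f ((k + l - t) mod l)) = (\<Sum>k<l. f k)"
proof (rule sum.reindex_bij_witness[where j = "\<lambda>k. (k + l - t) mod l" and i = "\<lambda>k. (k + t) mod l"])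
  fix k assume "t \<le> l" "k \<in> {..<l}"
  then show "((k + l - t) mod l + t) mod l = k" and "((k + t) mod l + l - t) mod l = k"
    by (subst int_int_eq[symmetric], simp add: cyclic_index_simps)+
qed auto

lemma sum_cyclic_reflect: "c < (l::nat) \<Longrightarrow> (\<Sum>k<l. f ((c + l - k) mod l)) = (\<Sum>k<l. f k)"
  by (rule sum.reindex_bij_witness[where j = "\<lambda>k. (c + l - k) mod l" and i = "\<lambda>k. (c + l - k) mod l"])
    (auto simp: cyclic_reflect_reflect)

lemma tconv_cong:
  "(\<And>t. t < l \<Longrightarrow> a t = a' t) \<Longrightarrow> (\<And>t. t < l \<Longrightarrow> b t = b' t) \<Longrightarrow> tconv l a b k = tconv l a' b' k"
  unfolding tconv_def by (intro sum.cong refl) auto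

lemma tconv_sum_left: "tconv l (\<lambda>k. \<Sum>i\<in>I. f i k) b k = (\<Sum>i\<in>I. tconv l (f i) b k)"
  unfolding tconv_def by (simp add: sum_distrib_right sum.swap[of _ I])

lemma tconv_sum_right: "tconv l a (\<lambda>k. \<Sum>i\<in>I. f i k) k = (\<Sum>i\<in>I. tconv l a (f i) k)"
  unfolding tconv_def by (simp add: sum_distrib_left sum.swap[of _ I])

lemma tconv_zero_left [simp]: "tconv l (\<lambda>_. 0) b k = 0"
  by (simp add: tconv_def)

lemma tconv_zero_right [simp]: "tconv l a (\<lambda>_. 0) k = 0"
  by (simp add: tconv_def)

lemma tconv_comm: "k < l \<Longrightarrow> tconv l a b k = tconv l b a k"
proof -
  assume k: "k < l"
  have "tconv l a b k = (\<Sum>t<l. a ((k + l - (k + l - t) mod l) mod l) * b ((k + l - t) mod l))"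
    unfolding tconv_def by (rule sum_cyclic_reflect[OF k, symmetric])
  also have "\<dots> = tconv l b a k"
    unfolding tconv_def using k by (intro sum.cong refl) (simp add: cyclic_reflect_reflect)
  finally show ?thesis .
qed

lemma tconv_assoc: "k < l \<Longrightarrow> tconv l (tconv l a b) c k = tconv l a (tconv l b c) k"
proof -
  assume k: "k < l"
  have "tconv l (tconv l a b) c k = (\<Sum>t<l. \<Sum>u<l. a (((k + l - t) mod l + l - u) mod l) * b u * c t)"
    unfolding tconv_def by (simp add: sum_distrib_right)
  also have "\<dots> = (\<Sum>t<l. \<Sum>u<l. a (((k + l - t) mod l + l - (u + l - t) mod l) mod l) * b ((u + l - t) mod l) * c t)"
    by (intro sum.cong refl sum_cyclic_shift[symmetric]) simp
  also have "\<dots> = (\<Sum>t<l. \<Sum>u<l. a ((k + l - u) mod l) * b ((u + l - t) mod l) * c t)"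
  proof -
    have "((k + l - t) mod l + l - (u + l - t) mod l) mod l = (k + l - u) mod l"
      if "t < l" "u < l" for t u
      using that k by (subst int_int_eq[symmetric]) (simp add: cyclic_index_simps)
    then show ?thesis by simp
  qed
  also have "\<dots> = tconv l a (tconv l b c) k"
    unfolding tconv_def by (subst sum.swap) (simp add: sum_distrib_left mult.assoc)
  finally show ?thesis .
qed

lemma trev_trev: "k < l \<Longrightarrow> trev l (trev l a) k = a k"
  unfolding trev_def using cyclic_reflect_reflect[of 0 l k] by simp

lemma trev_tconv: "k < l \<Longrightarrow> trev l (tconv l a b) k = tconv l (trev l a) (trev l b) k"
proof -
  assume k: "k < l"
  have "tconv l (trev l a) (trev l b) k
      = (\<Sum>t<l. a ((l - (k + l - (l - t) mod l) mod l) mod l) * b ((l - (l - t) mod l) mod l))"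
    unfolding tconv_def trev_def
    using sum_cyclic_reflect[of 0 l "\<lambda>t. a ((l - (k + l - t) mod l) mod l) * b ((l - t) mod l)"] k
    by simp
  also have "\<dots> = trev l (tconv l a b) k"
  proof -
    have "(l - (k + l - (l - t) mod l) mod l) mod l = ((l - k) mod l + l - t) mod l"
      and "(l - (l - t) mod l) mod l = t" if "t < l" for t
      using that k by (subst int_int_eq[symmetric], simp add: cyclic_index_simps)+
    then show ?thesis unfolding tconv_def trev_def by simp
  qed
  finally show ?thesis ..
qed

lemma tconv_tdelta_left: "k < l \<Longrightarrow> tconv l tdelta b k = b k"
proof -
  assume k: "k < l"
  have "tconv l tdelta b k = (\<Sum>t<l. if t = k then b t else 0)"
    unfolding tconv_def tdelta_def using k by (intro sum.cong) (simp_all add: cyclic_diff_eq_0_iff)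
  then show ?thesis using k by simp
qed

lemma tconv_tdelta_right: "k < l \<Longrightarrow> tconv l a tdelta k = a k"
  unfolding tconv_def tdelta_def by (simp add: if_distrib cong: if_cong)

lemma sum_tconv_mult_left: "(\<Sum>k<l. tconv l a b k * c k) = (\<Sum>t<l. b t * tconv l (trev l a) c t)"
proof -
  have idx: "(l - (t + l - k) mod l) mod l = (k + l - t) mod l" if "t < l" "k < l" for t k
    using that by (subst int_int_eq[symmetric]) (simp add: cyclic_index_simps)
  have "(\<Sum>k<l. tconv l a b k * c k) = (\<Sum>k<l. \<Sum>t<l. b t * (a ((k + l - t) mod l) * c k))"
    unfolding tconv_def sum_distrib_right by (simp add: mult_ac)
  also have "\<dots> = (\<Sum>t<l. \<Sum>k<l. b t * (a ((l - (t + l - k) mod l) mod l) * c k))"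
    by (subst sum.swap) (simp add: idx)
  also have "\<dots> = (\<Sum>t<l. b t * tconv l (trev l a) c t)"
    unfolding tconv_def trev_def by (simp add: sum_distrib_left)
  finally show ?thesis .
qed

lemma sum_tconv_mult_right: "(\<Sum>k<l. tconv l a b k * c k) = (\<Sum>t<l. a t * tconv l c (trev l b) t)"
proof -
  have "(\<Sum>k<l. tconv l a b k * c k) = (\<Sum>k<l. tconv l b a k * c k)"
    by (intro sum.cong refl) (simp add: tconv_comm)
  also have "\<dots> = (\<Sum>t<l. a t * tconv l c (trev l b) t)"
    unfolding sum_tconv_mult_left by (intro sum.cong refl) (simp add: tconv_comm)
  finally show ?thesis .
qed

lemma sum_trev_mult: "(\<Sum>k<l. trev l a k * trev l b k) = (\<Sum>k<l. a k * b k)"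
  unfolding trev_def using sum_cyclic_reflect[of 0 l "\<lambda>k. a k * b k"] by (cases "l = 0") simp_all

section \<open>The discrete Fourier transform of a tube\<close>

definition unit_root :: "nat \<Rightarrow> complex" where
  "unit_root l = exp (2 * of_real pi * \<i> / of_nat l)"

definition dft :: "nat \<Rightarrow> (nat \<Rightarrow> real) \<Rightarrow> nat \<Rightarrow> complex" where
  "dft l s k = (\<Sum>t<l. exp (- 2 * of_real pi * \<i> * of_nat (k * t) / of_nat l) * of_real (s t))"

lemma tdft_eq_dft: "tdft l A i j k = dft l (A i j) k"
  unfolding tdft_def dft_def ..

lemma unit_root_pow: "unit_root l ^ n = exp (2 * of_real pi * \<i> * of_nat n / of_nat l)"
  unfolding unit_root_def exp_of_nat_mult[symmetric] by (simp add: mult_ac)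

lemma cnj_unit_root_pow_eq_exp: "cnj (unit_root l ^ n) = exp (- 2 * of_real pi * \<i> * of_nat n / of_nat l)"
  unfolding unit_root_pow exp_cnj by simp

lemma unit_root_pow_eq_1_iff: "l > 0 \<Longrightarrow> unit_root l ^ n = 1 \<longleftrightarrow> l dvd n"
  unfolding unit_root_pow using complex_root_unity_eq_1[of l n] by simp

lemma unit_root_pow_mod: "l > 0 \<Longrightarrow> unit_root l ^ (n mod l) = unit_root l ^ n"
  by (metis (no_types) mult_div_mod_eq power_add power_mult power_one
      unit_root_pow_eq_1_iff dvd_refl mult_1 mult.commute)

lemma norm_unit_root: "norm (unit_root l) = 1"
  unfolding unit_root_def by simp

lemma cnj_unit_root_pow: "t \<le> l \<Longrightarrow> cnj (unit_root l ^ t) = unit_root l ^ (l - t)"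
proof (cases "l = 0")
  case True
  then show "t \<le> l \<Longrightarrow> ?thesis" by simp
next
  case False
  assume t: "t \<le> l"
  have "cnj (unit_root l ^ t) * unit_root l ^ t = 1"
    by (metis complex_norm_square mult.commute norm_power norm_unit_root power_one of_real_1)
  moreover have "unit_root l ^ (l - t) * unit_root l ^ t = 1"
    using t False by (simp add: power_add[symmetric] unit_root_pow_eq_1_iff)
  moreover have "unit_root l ^ t \<noteq> 0"
    unfolding unit_root_def by simp
  ultimately show ?thesis
    by (metis mult_right_cancel)
qed

lemma unit_root_pow_cyclic_diff:
  assumes "l > 0" "t \<le> l"
  shows "unit_root l ^ (j * ((k + l - t) mod l)) = unit_root l ^ (j * k) * cnj (unit_root l ^ (j * t))"
proof -
  have "unit_root l ^ (j * ((k + l - t) mod l)) = unit_root l ^ (j * (k + (l - t)))"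
    using assms unit_root_pow_mod[of l] by (metis Nat.add_diff_assoc mod_mult_right_eq)
  also have "\<dots> = unit_root l ^ (j * k) * (unit_root l ^ (l - t)) ^ j"
    by (simp add: distrib_left power_add power_mult[symmetric] mult.commute)
  also have "\<dots> = unit_root l ^ (j * k) * cnj (unit_root l ^ (j * t))"
    using assms by (simp add: cnj_unit_root_pow[symmetric] power_mult[symmetric] mult.commute)
  finally show ?thesis .
qed

lemma sum_unit_root_pow:
  assumes "l > 0"
  shows "(\<Sum>j<l. unit_root l ^ (j * a)) = (if l dvd a then of_nat l else 0)"
proof (cases "l dvd a")
  case True
  then have "unit_root l ^ (j * a) = 1" for j
    using assms by (simp add: unit_root_pow_eq_1_iff)
  then show ?thesis
    using True by simp
next
  case False
  have "(unit_root l ^ a) ^ l = 1"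
    using assms by (simp add: power_mult[symmetric] unit_root_pow_eq_1_iff)
  then show ?thesis
    using assms False by (simp add: power_mult mult.commute[of _ a] sum_gp_strict unit_root_pow_eq_1_iff)
qed

lemma dft_inversion:
  assumes l: "l > 0" and d: "d < l"
  shows "(\<Sum>j<l. dft l s j * unit_root l ^ (j * d)) = of_nat l * of_real (s d)"
proof -
  have "(\<Sum>j<l. dft l s j * unit_root l ^ (j * d))
      = (\<Sum>t<l. of_real (s t) * (\<Sum>j<l. unit_root l ^ (j * ((d + l - t) mod l))))"
    unfolding dft_def sum_distrib_left sum_distrib_right cnj_unit_root_pow_eq_exp[symmetric]
    using l by (subst sum.swap) (simp add: unit_root_pow_cyclic_diff mult_ac)
  also have "\<dots> = (\<Sum>t<l. if t = d then of_nat l * of_real (s t) else 0)"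
    using l d by (intro sum.cong refl) (simp add: sum_unit_root_pow dvd_eq_mod_eq_0 cyclic_diff_eq_0_iff)
  finally show ?thesis
    using d by simp
qed

text \<open>The DFT diagonalises the circulant form: with \<omega> = unit_root l and
  X_j = \<Sum>_k x_k \<omega>^(jk), l times the form equals \<Sum>_j dft_j |X_j|^2.\<close>

lemma tconv_quadratic_form_nonneg:
  assumes dft: "\<forall>k<l. Im (dft l s k) = 0 \<and> 0 \<le> Re (dft l s k)"
  shows "0 \<le> (\<Sum>k<l. tconv l s x k * x k)"
proof (cases "l = 0")
  case False
  then have l: "l > 0" by simp
  define X where "X j = (\<Sum>k<l. of_real (x k) * unit_root l ^ (j * k))" for j
  have real: "of_real (Re (dft l s j)) = dft l s j" if "j < l" for j
    using dft that by (simp add: complex_eq_iff)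
  have "complex_of_real (real l * (\<Sum>k<l. tconv l s x k * x k))
      = (\<Sum>k<l. \<Sum>t<l. (of_nat l * of_real (s ((k + l - t) mod l))) * of_real (x t) * of_real (x k))"
    unfolding tconv_def
    by (simp add: sum_distrib_left sum_distrib_right) (intro sum.cong refl; simp add: mult_ac)
  also have "\<dots> = (\<Sum>k<l. \<Sum>t<l. \<Sum>j<l. dft l s j * (of_real (x k) * unit_root l ^ (j * k))
                                           * cnj (of_real (x t) * unit_root l ^ (j * t)))"
    using l by (intro sum.cong refl)
      (simp add: dft_inversion[symmetric] unit_root_pow_cyclic_diff sum_distrib_left sum_distrib_right mult_ac)
  also have "\<dots> = (\<Sum>j<l. \<Sum>k<l. \<Sum>t<l. dft l s j * (of_real (x k) * unit_root l ^ (j * k))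
                                           * cnj (of_real (x t) * unit_root l ^ (j * t)))"
    by (rule trans[OF sum.cong[OF refl sum.swap] sum.swap])
  also have "\<dots> = (\<Sum>j<l. dft l s j * (cnj (X j) * X j))"
    unfolding X_def sum_distrib_left sum_distrib_right cnj_sum by (simp add: mult_ac)
  also have "\<dots> = of_real (\<Sum>j<l. Re (dft l s j) * (cmod (X j))\<^sup>2)"
    unfolding of_real_sum
  proof (intro sum.cong refl)
    fix j assume "j \<in> {..<l}"
    then show "dft l s j * (cnj (X j) * X j) = of_real (Re (dft l s j) * (cmod (X j))\<^sup>2)"
      using real[of j] complex_norm_square[of "X j"] by (simp add: mult.commute)
  qed
  finally have "real l * (\<Sum>k<l. tconv l s x k * x k) = (\<Sum>j<l. Re (dft l s j) * (cmod (X j))\<^sup>2)"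
    by (simp only: of_real_eq_iff)
  also have "\<dots> \<ge> 0"
    using dft by (intro sum_nonneg) simp
  finally show ?thesis
    using l by (simp add: zero_le_mult_iff)
qed (simp add: tconv_def)

lemma trev_eq_of_dft_real:
  assumes dft: "\<forall>j<l. Im (dft l s j) = 0" and k: "k < l"
  shows "trev l s k = s k"
proof -
  have l: "l > 0" using k by simp
  have "of_nat l * of_real (trev l s k) = (\<Sum>j<l. dft l s j * unit_root l ^ (j * ((l - k) mod l)))"
    unfolding trev_def using l by (simp add: dft_inversion)
  also have "\<dots> = cnj (\<Sum>j<l. dft l s j * unit_root l ^ (j * k))"
    unfolding cnj_sum
  proof (intro sum.cong refl)
    fix j assume "j \<in> {..<l}"
    then have "cnj (dft l s j) = dft l s j"
      using dft by (simp add: complex_eq_iff)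
    then show "dft l s j * unit_root l ^ (j * ((l - k) mod l)) = cnj (dft l s j * unit_root l ^ (j * k))"
      using unit_root_pow_cyclic_diff[of l k j 0] l k by simp
  qed
  also have "\<dots> = of_nat l * of_real (s k)"
    using l k by (simp add: dft_inversion)
  finally show ?thesis
    using l by simp
qed

section \<open>Algebra of the t-product\<close>

text \<open>Tensors carry arbitrary values outside their index ranges, so identities are stated up to \<open>teq\<close>.\<close>

lemma tprod_tconv: "tprod p l A B i j = (\<lambda>k. \<Sum>m<p. tconv l (A i m) (B m j) k)"
  unfolding tprod_def tconv_def by (rule ext) (rule sum.swap)

lemma ttrans_trev: "ttrans l A i j = trev l (A j i)"
  unfolding ttrans_def trev_def ..

lemma tid_tdelta: "tid i j = (if i = j then tdelta else (\<lambda>_. 0))"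
  unfolding tid_def tdelta_def by auto

lemma teq_refl: "teq m q l A A"
  by (simp add: teq_def)

lemma teq_sym: "teq m q l A B \<Longrightarrow> teq m q l B A"
  by (simp add: teq_def)

lemma teq_trans [trans]: "teq m q l A B \<Longrightarrow> teq m q l B C \<Longrightarrow> teq m q l A C"
  by (simp add: teq_def)

lemma tprod_cong:
  "teq m p l A A' \<Longrightarrow> teq p q l B B' \<Longrightarrow> teq m q l (tprod p l A B) (tprod p l A' B')"
  unfolding teq_def tprod_def by (intro allI impI sum.cong refl) auto

lemma tinner_cong: "teq m q l A A' \<Longrightarrow> teq m q l B B' \<Longrightarrow> tinner m q l A B = tinner m q l A' B'"
  unfolding teq_def tinner_def by (intro sum.cong refl) auto

lemma tprod_assoc: "teq m r l (tprod q l (tprod p l A B) C) (tprod p l A (tprod q l B C))"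
  unfolding teq_def
proof (intro allI impI)
  fix i j k assume k: "k < l"
  have "tprod q l (tprod p l A B) C i j k = (\<Sum>s<q. \<Sum>r<p. tconv l (tconv l (A i r) (B r s)) (C s j) k)"
    by (simp add: tprod_tconv tconv_sum_left)
  also have "\<dots> = (\<Sum>r<p. \<Sum>s<q. tconv l (A i r) (tconv l (B r s) (C s j)) k)"
    using k by (subst sum.swap) (simp add: tconv_assoc)
  also have "\<dots> = tprod p l A (tprod q l B C) i j k"
    by (simp add: tprod_tconv tconv_sum_right)
  finally show "tprod q l (tprod p l A B) C i j k = tprod p l A (tprod q l B C) i j k" .
qed

lemma tid_tprod: "teq m q l (tprod m l tid B) B"
  unfolding teq_def
  by (simp add: tprod_tconv tid_tdelta if_distrib[where f = "\<lambda>a. tconv l a _ _"] tconv_tdelta_left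
      cong: if_cong)

lemma tprod_tid: "teq m q l (tprod q l A tid) A"
  unfolding teq_def
  by (simp add: tprod_tconv tid_tdelta if_distrib[where f = "\<lambda>b. tconv l _ b _"] tconv_tdelta_right
      cong: if_cong)

lemma ttrans_ttrans: "teq m q l (ttrans l (ttrans l A)) A"
  unfolding teq_def by (simp add: ttrans_trev trev_trev)

lemma ttrans_tprod: "teq q m l (ttrans l (tprod p l A B)) (tprod p l (ttrans l B) (ttrans l A))"
  unfolding teq_def
proof (intro allI impI)
  fix i j k assume k: "k < l"
  have "ttrans l (tprod p l A B) i j k = (\<Sum>r<p. trev l (tconv l (A j r) (B r i)) k)"
    by (simp add: ttrans_def trev_def tprod_tconv)
  also have "\<dots> = tprod p l (ttrans l B) (ttrans l A) i j k"
    using k by (simp add: tprod_tconv ttrans_trev trev_tconv tconv_comm)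
  finally show "ttrans l (tprod p l A B) i j k = tprod p l (ttrans l B) (ttrans l A) i j k" .
qed

lemma tprod_diff_left: "tprod p l (X - Y) B = tprod p l X B - tprod p l Y B"
  unfolding tprod_def by (simp add: fun_eq_iff left_diff_distrib sum_subtractf)

lemma tinner_diff_left: "tinner m q l (X - Y) C = tinner m q l X C - tinner m q l Y C"
  unfolding tinner_def by (simp add: left_diff_distrib sum_subtractf)

lemma tinner_diff_right: "tinner m q l C (X - Y) = tinner m q l C X - tinner m q l C Y"
  unfolding tinner_def by (simp add: right_diff_distrib sum_subtractf)

lemma tinner_ttrans: "tinner q m l (ttrans l A) (ttrans l B) = tinner m q l A B"
  unfolding tinner_def ttrans_trev sum_trev_mult by (rule sum.swap)

lemma sum_tprod_mult:
  "(\<Sum>k<l. tprod p l A B i j k * c k) = (\<Sum>r<p. \<Sum>k<l. tconv l (A i r) (B r j) k * c k)"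
  by (simp add: tprod_tconv sum_distrib_right sum.swap[of _ "{..<p}"])

lemma tinner_tprod_left: "tinner m q l (tprod p l A B) C = tinner p q l B (tprod m l (ttrans l A) C)"
proof -
  have "tinner m q l (tprod p l A B) C
      = (\<Sum>i<m. \<Sum>j<q. \<Sum>r<p. \<Sum>t<l. B r j t * tconv l (trev l (A i r)) (C i j) t)"
    unfolding tinner_def sum_tprod_mult sum_tconv_mult_left ..
  also have "\<dots> = (\<Sum>r<p. \<Sum>j<q. \<Sum>i<m. \<Sum>t<l. B r j t * tconv l (trev l (A i r)) (C i j) t)"
    by (rule trans[OF sum.swap trans[OF sum.cong[OF refl sum.swap] sum.swap]])
  also have "\<dots> = tinner p q l B (tprod m l (ttrans l A) C)"
    unfolding tinner_def tprod_tconv ttrans_trev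
    by (simp add: sum_distrib_left sum.swap[of _ "{..<m}"])
  finally show ?thesis .
qed

lemma tinner_tprod_right: "tinner m q l (tprod p l A B) C = tinner m p l A (tprod q l C (ttrans l B))"
proof -
  have "tinner m q l (tprod p l A B) C
      = (\<Sum>i<m. \<Sum>j<q. \<Sum>r<p. \<Sum>t<l. A i r t * tconv l (C i j) (trev l (B r j)) t)"
    unfolding tinner_def sum_tprod_mult sum_tconv_mult_right ..
  also have "\<dots> = (\<Sum>i<m. \<Sum>r<p. \<Sum>j<q. \<Sum>t<l. A i r t * tconv l (C i j) (trev l (B r j)) t)"
    by (rule sum.cong[OF refl sum.swap])
  also have "\<dots> = tinner m p l A (tprod q l C (ttrans l B))"
    unfolding tinner_def tprod_tconv ttrans_trev
    by (simp add: sum_distrib_left sum.swap[of _ "{..<q}"])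
  finally show ?thesis .
qed

section \<open>Optimality of the polar factor\<close>

lemma tprod_fdiag_right:
  assumes S: "fdiag p l S" and j: "j < p" and k: "k < l"
  shows "tprod p l M S i j k = tconv l (S j j) (M i j) k"
proof -
  have "tconv l (M i r) (S r j) k = 0" if "r \<in> {..<p} - {j}" for r
    using S j that tconv_cong[of l "M i r" "M i r" "S r j" "\<lambda>_. 0" k] unfolding fdiag_def by auto
  then have "(\<Sum>r\<in>{..<p} - {j}. tconv l (M i r) (S r j) k) = 0"
    by (rule sum.neutral[rule_format])
  then have "tprod p l M S i j k = tconv l (M i j) (S j j) k"
    using j by (simp add: tprod_tconv sum.remove[of "{..<p}" j])
  then show ?thesis
    using k by (simp add: tconv_comm)
qed

lemma tinner_tprod_fdiag_nonneg:
  assumes "fdiag p l S" and "\<forall>i<p. \<forall>k<l. Im (tdft l S i i k) = 0 \<and> 0 \<le> Re (tdft l S i i k)"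
  shows "0 \<le> tinner n p l (tprod p l M S) M"
  unfolding tinner_def
proof (rule sum_nonneg, rule sum_nonneg)
  fix i j assume "j \<in> {..<p}"
  then have "(\<Sum>k<l. tprod p l M S i j k * M i j k) = (\<Sum>k<l. tconv l (S j j) (M i j) k * M i j k)"
    using assms(1) by (intro sum.cong refl) (simp add: tprod_fdiag_right)
  also have "\<dots> \<ge> 0"
    using assms(2) \<open>j \<in> {..<p}\<close> by (intro tconv_quadratic_form_nonneg) (simp add: tdft_eq_dft)
  finally show "0 \<le> (\<Sum>k<l. tprod p l M S i j k * M i j k)" .
qed

lemma ttrans_fdiag_teq:
  assumes "fdiag p l S" and "\<forall>i<p. \<forall>k<l. Im (tdft l S i i k) = 0"
  shows "teq p p l (ttrans l S) S"
  unfolding teq_def ttrans_trev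
proof (intro allI impI)
  fix i j k assume "i < p" "j < p" "k < l"
  then show "trev l (S j i) k = S i j k"
    using assms trev_eq_of_dft_real[of l "S i i" k]
    by (cases "i = j") (auto simp: fdiag_def trev_def tdft_eq_dft)
qed

lemma tprod_in_tStiefel:
  assumes X: "X \<in> tStiefel n p l" and W: "teq p p l (tprod p l (ttrans l W) W) tid"
  shows "tprod p l X W \<in> tStiefel n p l"
proof -
  have "teq p p l (tprod n l (ttrans l (tprod p l X W)) (tprod p l X W))
                  (tprod n l (tprod p l (ttrans l W) (ttrans l X)) (tprod p l X W))"
    by (rule tprod_cong[OF ttrans_tprod teq_refl])
  also have "teq p p l \<dots> (tprod p l (ttrans l W) (tprod n l (ttrans l X) (tprod p l X W)))"
    by (rule tprod_assoc)
  also have "teq p p l \<dots> (tprod p l (ttrans l W) (tprod p l (tprod n l (ttrans l X) X) W))"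
    by (rule tprod_cong[OF teq_refl teq_sym[OF tprod_assoc]])
  also have "teq p p l \<dots> (tprod p l (ttrans l W) (tprod p l tid W))"
    using X unfolding tStiefel_def by (intro tprod_cong teq_refl) simp
  also have "teq p p l \<dots> (tprod p l (ttrans l W) W)"
    by (rule tprod_cong[OF teq_refl tid_tprod])
  also have "teq p p l \<dots> tid"
    by (rule W)
  finally show ?thesis
    unfolding tStiefel_def by simp
qed

lemma torthogonal_ttrans: "torthogonal p l V \<Longrightarrow> torthogonal p l (ttrans l V)"
  unfolding torthogonal_def
  using teq_trans[OF tprod_cong[OF ttrans_ttrans teq_refl]] teq_trans[OF tprod_cong[OF teq_refl ttrans_ttrans]]
  by blast

lemma tinner_tStiefel_le:
  assumes sym: "teq p p l (ttrans l S) S"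
    and psd: "\<And>M. 0 \<le> tinner n p l (tprod p l M S) M"
    and X: "X \<in> tStiefel n p l" and Y: "Y \<in> tStiefel n p l"
  shows "tinner p p l S (tprod n l (ttrans l X) Y) \<le> tinner p p l S tid"
proof -
  have self: "tinner n p l (tprod p l Z S) Z = tinner p p l S tid" if "Z \<in> tStiefel n p l" for Z
    using that unfolding tinner_tprod_left tStiefel_def by (intro tinner_cong teq_refl) simp
  have "tinner n p l (tprod p l Y S) X = tinner p p l (ttrans l S) (ttrans l (tprod n l (ttrans l Y) X))"
    unfolding tinner_tprod_left tinner_ttrans ..
  also have "\<dots> = tinner p p l S (tprod n l (ttrans l X) Y)"
    by (intro tinner_cong sym teq_trans[OF ttrans_tprod tprod_cong[OF teq_refl ttrans_ttrans]])
  finally have cross: "tinner n p l (tprod p l Y S) X = tinner p p l S (tprod n l (ttrans l X) Y)" .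
  have "0 \<le> tinner n p l (tprod p l (X - Y) S) (X - Y)"
    by (rule psd)
  also have "\<dots> = tinner n p l (tprod p l X S) X + tinner n p l (tprod p l Y S) Y
                 - tinner n p l (tprod p l X S) Y - tinner n p l (tprod p l Y S) X"
    by (simp add: tprod_diff_left tinner_diff_left tinner_diff_right)
  also have "\<dots> = 2 * tinner p p l S tid - 2 * tinner p p l S (tprod n l (ttrans l X) Y)"
    using self[OF X] self[OF Y] cross by (simp add: tinner_tprod_left)
  finally show ?thesis by simp
qed

lemma tinner_tsvd:
  assumes "teq n p l A (tprod p l (tprod p l U S) (ttrans l V))"
  shows "tinner n p l A Q = tinner p p l S (tprod n l (ttrans l U) (tprod p l Q V))"
proof -
  have "tinner n p l A Q = tinner n p l (tprod p l U S) (tprod p l Q (ttrans l (ttrans l V)))"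
    using assms by (simp add: tinner_cong[OF _ teq_refl] tinner_tprod_right)
  also have "\<dots> = tinner n p l (tprod p l U S) (tprod p l Q V)"
    by (intro tinner_cong teq_refl tprod_cong ttrans_ttrans)
  also have "\<dots> = tinner p p l S (tprod n l (ttrans l U) (tprod p l Q V))"
    by (rule tinner_tprod_left)
  finally show ?thesis .
qed

theorem mainTheorem17:
  fixes n p l :: nat and A U S V :: tensor
  assumes "n \<ge> p"
    and "compact_tsvd n p l A U S V"
  shows "tprod p l U (ttrans l V) \<in> tStiefel n p l \<and>
         (\<forall>Q \<in> tStiefel n p l. tinner n p l A Q \<le> tinner n p l A (tprod p l U (ttrans l V)))"
proof -
  define P where "P = tprod p l U (ttrans l V)"
  have U: "U \<in> tStiefel n p l" and V: "torthogonal p l V" and S: "fdiag p l S"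
    and dft: "\<forall>i<p. \<forall>k<l. Im (tdft l S i i k) = 0 \<and> 0 \<le> Re (tdft l S i i k)"
    and A: "teq n p l A (tprod p l (tprod p l U S) (ttrans l V))"
    using assms(2) unfolding compact_tsvd_def by blast+
  have VtV: "teq p p l (tprod p l (ttrans l V) V) tid"
    using V unfolding torthogonal_def by blast
  have P: "P \<in> tStiefel n p l"
    unfolding P_def using U torthogonal_ttrans[OF V]
    by (intro tprod_in_tStiefel) (simp_all add: torthogonal_def)
  have "teq n p l (tprod p l P V) U"
    unfolding P_def using teq_trans[OF tprod_assoc teq_trans[OF tprod_cong[OF teq_refl VtV] tprod_tid]] .
  then have "teq p p l (tprod n l (ttrans l U) (tprod p l P V)) (tprod n l (ttrans l U) U)"
    by (rule tprod_cong[OF teq_refl])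
  also have "teq p p l \<dots> tid"
    using U unfolding tStiefel_def by simp
  finally have AP: "tinner n p l A P = tinner p p l S tid"
    unfolding tinner_tsvd[OF A] by (rule tinner_cong[OF teq_refl])
  have "tinner n p l A Q \<le> tinner n p l A P" if "Q \<in> tStiefel n p l" for Q
    unfolding tinner_tsvd[OF A, of Q] AP
    using S dft by (intro tinner_tStiefel_le[OF _ _ U tprod_in_tStiefel[OF that VtV]]
        ttrans_fdiag_teq tinner_tprod_fdiag_nonneg) auto
  then show ?thesis
    using P unfolding P_def by blast
qed

end
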